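(* Let $P : E \to B$ be a functor between finite categories which is both fibered in groupoids and cofibered in groupoids, and suppose $B$ is connected. Let $F = P^{-1}(b)$ be the fiber category over an object $b$ of $B$ (all fibers are equivalent, so the choice of $b$ does not matter). If $E$ and $B$ have Euler characteristics, then $F$ has Euler characteristic and \[ \chi(E) = \chi(B)\,\chi(F). \]
   Context: Matrices and Euler characteristic: for finite sets $I,J$ and $\zeta : I\times J \to \mathbb{Q}$, a weighting is $k^{\bullet} : J \to \mathbb{Q}$ with $\sum_j \zeta(i,j)k^j = 1$ for all $i$; a coweighting is $k_{\bullet} : I\to\mathbb{Q}$ with $\sum_i k_i\zeta(i,j)=1$ for all $j$. $\zeta$ has Euler characteristic if it has both, and then $|\zeta| = \sum_j k^j = \sum_i k_i$ (independent of choices). A finite category $A$ (finitely many objects and morphisms) has similarity matrix $\zeta_A(x,y) = \#A(x,y)$ on $\mathrm{ob}(A)\times \mathrm{ob}(A)$; $A$ has Euler characteristic if $\zeta_A$ does, and $\chi(A) = |\zeta_A|$. A morphism $f : e \to e'$ in $E$ is cartesian (for $P$) if for every $g : e'' \to e'$ in $E$ and every $h : P(e'') \to P(e)$ in $B$ with $P(f)\circ h = P(g)$ there is a unique $\tilde h : e'' \to e$ with $P(\tilde h) = h$ and $f \circ \tilde h = g$. $P$ is fibered in groupoids if every morphism of $E$ is cartesian and every morphism $f : b \to P(e)$ in $B$ has a lift $\tilde f : e' \to e$ in $E$ with $P(\tilde f) = f$. Cofibered in groupoids is the dual notion (reverse all morphisms). The fiber category $P^{-1}(b)$ is the subcategory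 of $E$ with objects $e$ with $P(e) = b$ and morphisms $f$ with $P(f) = \mathrm{id}_b$. A category is connected if any two objects are joined by a finite zigzag of morphisms. *)

theory Defs
  imports Main "HOL.Rat"
begin

text \<open>A category: objects, morphisms, domain, codomain, identities and composition.
  cComp C g f is g o f, defined when cCod C f = cDom C g.\<close>

record ('o, 'a) cat =
  cObj :: "'o set"
  cArr :: "'a set"
  cDom :: "'a \<Rightarrow> 'o"
  cCod :: "'a \<Rightarrow> 'o"
  cId  :: "'o \<Rightarrow> 'a"
  cComp :: "'a \<Rightarrow> 'a \<Rightarrow> 'a"

definition category :: "('o, 'a) cat \<Rightarrow> bool" where
  "category C \<longleftrightarrow>
     (\<forall>f\<in>cArr C. cDom C f \<in> cObj C \<and> cCod C f \<in> cObj C) \<and>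
     (\<forall>x\<in>cObj C. cId C x \<in> cArr C \<and> cDom C (cId C x) = x \<and> cCod C (cId C x) = x) \<and>
     (\<forall>f\<in>cArr C. \<forall>g\<in>cArr C. cCod C f = cDom C g \<longrightarrow>
        cComp C g f \<in> cArr C \<and> cDom C (cComp C g f) = cDom C f \<and> cCod C (cComp C g f) = cCod C g) \<and>
     (\<forall>f\<in>cArr C. cComp C (cId C (cCod C f)) f = f \<and> cComp C f (cId C (cDom C f)) = f) \<and>
     (\<forall>f\<in>cArr C. \<forall>g\<in>cArr C. \<forall>h\<in>cArr C. cCod C f = cDom C g \<longrightarrow> cCod C g = cDom C h \<longrightarrow>
        cComp C h (cComp C g f) = cComp C (cComp C h g) f)"

definition finite_cat :: "('o, 'a) cat \<Rightarrow> bool" where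
  "finite_cat C \<longleftrightarrow> category C \<and> finite (cObj C) \<and> finite (cArr C)"

definition opposite :: "('o, 'a) cat \<Rightarrow> ('o, 'a) cat" where
  "opposite C = \<lparr>cObj = cObj C, cArr = cArr C, cDom = cCod C, cCod = cDom C,
                 cId = cId C, cComp = (\<lambda>g f. cComp C f g)\<rparr>"

definition is_functor :: "('o, 'a) cat \<Rightarrow> ('p, 'b) cat \<Rightarrow> ('o \<Rightarrow> 'p) \<Rightarrow> ('a \<Rightarrow> 'b) \<Rightarrow> bool" where
  "is_functor E B Po Pa \<longleftrightarrow> category E \<and> category B \<and>
     (\<forall>x\<in>cObj E. Po x \<in> cObj B) \<and>
     (\<forall>f\<in>cArr E. Pa f \<in> cArr B \<and> cDom B (Pa f) = Po (cDom E f) \<and> cCod B (Pa f) = Po (cCod E f)) \<and>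
     (\<forall>x\<in>cObj E. Pa (cId E x) = cId B (Po x)) \<and>
     (\<forall>f\<in>cArr E. \<forall>g\<in>cArr E. cCod E f = cDom E g \<longrightarrow> Pa (cComp E g f) = cComp B (Pa g) (Pa f))"

definition cartesian :: "('o, 'a) cat \<Rightarrow> ('p, 'b) cat \<Rightarrow> ('o \<Rightarrow> 'p) \<Rightarrow> ('a \<Rightarrow> 'b) \<Rightarrow> 'a \<Rightarrow> bool" where
  "cartesian E B Po Pa f \<longleftrightarrow>
     (\<forall>g\<in>cArr E. cCod E g = cCod E f \<longrightarrow>
       (\<forall>h\<in>cArr B. cDom B h = Po (cDom E g) \<longrightarrow> cCod B h = Po (cDom E f) \<longrightarrow>
          cComp B (Pa f) h = Pa g \<longrightarrow>
          (\<exists>!ht. ht \<in> cArr E \<and> cDom E ht = cDom E g \<and> cCod E ht = cDom E f \<and>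
                 Pa ht = h \<and> cComp E f ht = g)))"

definition fibered_in_groupoids :: "('o, 'a) cat \<Rightarrow> ('p, 'b) cat \<Rightarrow> ('o \<Rightarrow> 'p) \<Rightarrow> ('a \<Rightarrow> 'b) \<Rightarrow> bool" where
  "fibered_in_groupoids E B Po Pa \<longleftrightarrow>
     (\<forall>f\<in>cArr E. cartesian E B Po Pa f) \<and>
     (\<forall>e\<in>cObj E. \<forall>f\<in>cArr B. cCod B f = Po e \<longrightarrow>
        (\<exists>ft\<in>cArr E. cCod E ft = e \<and> Pa ft = f))"

definition cofibered_in_groupoids :: "('o, 'a) cat \<Rightarrow> ('p, 'b) cat \<Rightarrow> ('o \<Rightarrow> 'p) \<Rightarrow> ('a \<Rightarrow> 'b) \<Rightarrow> bool" where
  "cofibered_in_groupoids E B Po Pa \<longleftrightarrow> fibered_in_groupoids (opposite E) (opposite B) Po Pa"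

definition fiber :: "('o, 'a) cat \<Rightarrow> ('p, 'b) cat \<Rightarrow> ('o \<Rightarrow> 'p) \<Rightarrow> ('a \<Rightarrow> 'b) \<Rightarrow> 'p \<Rightarrow> ('o, 'a) cat" where
  "fiber E B Po Pa b = E\<lparr>cObj := {e\<in>cObj E. Po e = b}, cArr := {f\<in>cArr E. Pa f = cId B b}\<rparr>"

definition connected_cat :: "('o, 'a) cat \<Rightarrow> bool" where
  "connected_cat C \<longleftrightarrow>
     (let R = {(cDom C f, cCod C f) | f. f \<in> cArr C} in
      \<forall>x\<in>cObj C. \<forall>y\<in>cObj C. (x, y) \<in> (R \<union> R\<inverse>)\<^sup>*)"

definition is_weighting :: "'i set \<Rightarrow> 'j set \<Rightarrow> ('i \<Rightarrow> 'j \<Rightarrow> rat) \<Rightarrow> ('j \<Rightarrow> rat) \<Rightarrow> bool" where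
  "is_weighting I J \<zeta> k \<longleftrightarrow> (\<forall>i\<in>I. (\<Sum>j\<in>J. \<zeta> i j * k j) = 1)"

definition is_coweighting :: "'i set \<Rightarrow> 'j set \<Rightarrow> ('i \<Rightarrow> 'j \<Rightarrow> rat) \<Rightarrow> ('i \<Rightarrow> rat) \<Rightarrow> bool" where
  "is_coweighting I J \<zeta> k \<longleftrightarrow> (\<forall>j\<in>J. (\<Sum>i\<in>I. k i * \<zeta> i j) = 1)"

definition has_euler_char_mat :: "'i set \<Rightarrow> 'j set \<Rightarrow> ('i \<Rightarrow> 'j \<Rightarrow> rat) \<Rightarrow> bool" where
  "has_euler_char_mat I J \<zeta> \<longleftrightarrow> (\<exists>k. is_weighting I J \<zeta> k) \<and> (\<exists>k. is_coweighting I J \<zeta> k)"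

definition euler_char_mat :: "'i set \<Rightarrow> 'j set \<Rightarrow> ('i \<Rightarrow> 'j \<Rightarrow> rat) \<Rightarrow> rat" where
  "euler_char_mat I J \<zeta> = (\<Sum>j\<in>J. (SOME k. is_weighting I J \<zeta> k) j)"

definition sim_matrix :: "('o, 'a) cat \<Rightarrow> 'o \<Rightarrow> 'o \<Rightarrow> rat" where
  "sim_matrix C x y = of_nat (card {f\<in>cArr C. cDom C f = x \<and> cCod C f = y})"

definition has_euler_char :: "('o, 'a) cat \<Rightarrow> bool" where
  "has_euler_char C \<longleftrightarrow> has_euler_char_mat (cObj C) (cObj C) (sim_matrix C)"

definition euler_char :: "('o, 'a) cat \<Rightarrow> rat" where
  "euler_char C = euler_char_mat (cObj C) (cObj C) (sim_matrix C)"

end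

theory Submission
  imports Defs
begin

(* Every fiber F_b = P^{-1}(b) is a finite groupoid; a groupoid G has the weighting
   x |-> 1/#(arrows out of x) and the coweighting x |-> 1/#(arrows into x), hence an
   Euler characteristic chi(F_b) = sum of that weighting over the objects of F_b.
   Cartesianness identifies the arrows x -> x' of E over a fixed h : b -> b' with the
   fiber arrows x -> dom(ft) for any lift ft of h ending in x', so against the fiber
   coweighting they sum to 1; dually (cocartesianness) against the fiber weighting.
   This yields:
     (1) chi(F_b) is the same for the source and target of every arrow of B, hence
         constant on the connected category B;
     (2) for any weighting k of B, e |-> k(P e) * w(e) is a weighting of E, where w is
         the weighting of the fiber containing e.
   Summing the weighting in (2) fiber by fiber gives chi(E) = sum_b k(b) chi(F_b),
   which by (1) equals chi(B) * chi(F_b). *)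

lemma cat_facts:
  assumes "category C"
  shows cat_dom: "f \<in> cArr C \<Longrightarrow> cDom C f \<in> cObj C"
    and cat_cod: "f \<in> cArr C \<Longrightarrow> cCod C f \<in> cObj C"
    and cat_id: "x \<in> cObj C \<Longrightarrow> cId C x \<in> cArr C"
    and cat_id_dom: "x \<in> cObj C \<Longrightarrow> cDom C (cId C x) = x"
    and cat_id_cod: "x \<in> cObj C \<Longrightarrow> cCod C (cId C x) = x"
    and cat_comp: "f \<in> cArr C \<Longrightarrow> g \<in> cArr C \<Longrightarrow> cCod C f = cDom C g \<Longrightarrow> cComp C g f \<in> cArr C"
    and cat_comp_dom: "f \<in> cArr C \<Longrightarrow> g \<in> cArr C \<Longrightarrow> cCod C f = cDom C g \<Longrightarrow>
        cDom C (cComp C g f) = cDom C f"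
    and cat_comp_cod: "f \<in> cArr C \<Longrightarrow> g \<in> cArr C \<Longrightarrow> cCod C f = cDom C g \<Longrightarrow>
        cCod C (cComp C g f) = cCod C g"
    and cat_idl: "f \<in> cArr C \<Longrightarrow> cComp C (cId C (cCod C f)) f = f"
    and cat_idr: "f \<in> cArr C \<Longrightarrow> cComp C f (cId C (cDom C f)) = f"
    and cat_assoc: "f \<in> cArr C \<Longrightarrow> g \<in> cArr C \<Longrightarrow> h \<in> cArr C \<Longrightarrow>
        cCod C f = cDom C g \<Longrightarrow> cCod C g = cDom C h \<Longrightarrow>
        cComp C h (cComp C g f) = cComp C (cComp C h g) f"
  using assms unfolding category_def by blast+

lemma opposite_simps [simp]:
  "cObj (opposite C) = cObj C" "cArr (opposite C) = cArr C"
  "cDom (opposite C) = cCod C" "cCod (opposite C) = cDom C" "cId (opposite C) = cId C"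
  by (simp_all add: opposite_def)

lemma category_opposite: "category C \<Longrightarrow> category (opposite C)"
  unfolding category_def opposite_def by auto

lemma finite_cat_opposite: "finite_cat C \<Longrightarrow> finite_cat (opposite C)"
  unfolding finite_cat_def by (simp add: category_opposite)

lemma functor_opposite: "is_functor E B Po Pa \<Longrightarrow> is_functor (opposite E) (opposite B) Po Pa"
  unfolding is_functor_def by (auto simp: category_opposite) (auto simp: opposite_def)

definition Hom :: "('o, 'a) cat \<Rightarrow> 'o \<Rightarrow> 'o \<Rightarrow> 'a set" where
  "Hom C x y = {f \<in> cArr C. cDom C f = x \<and> cCod C f = y}"

definition Out :: "('o, 'a) cat \<Rightarrow> 'o \<Rightarrow> 'a set" where
  "Out C x = {f \<in> cArr C. cDom C f = x}"

definition In :: "('o, 'a) cat \<Rightarrow> 'o \<Rightarrow> 'a set" where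
  "In C x = {f \<in> cArr C. cCod C f = x}"

lemma Out_opposite: "Out (opposite C) x = In C x"
  and In_opposite: "In (opposite C) x = Out C x"
  by (simp_all add: Out_def In_def)

lemma sim_matrix_Hom: "sim_matrix C x y = of_nat (card (Hom C x y))"
  unfolding sim_matrix_def Hom_def by simp

lemma sim_matrix_opposite: "sim_matrix (opposite C) x y = sim_matrix C y x"
  unfolding sim_matrix_def by (simp add: conj_commute)

section \<open>Weightings of finite groupoids\<close>

definition groupoid :: "('o, 'a) cat \<Rightarrow> bool" where
  "groupoid C \<longleftrightarrow> (\<forall>f\<in>cArr C. \<exists>g\<in>cArr C. cDom C g = cCod C f \<and> cCod C g = cDom C f \<and>
      cComp C g f = cId C (cDom C f) \<and> cComp C f g = cId C (cCod C f))"

lemma groupoid_opposite: "groupoid C \<Longrightarrow> groupoid (opposite C)"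
  unfolding groupoid_def opposite_def by fastforce

text \<open>If \<open>g : x \<rightarrow> y\<close> has a right inverse, precomposition with \<open>g\<close> embeds the arrows
  out of \<open>y\<close> into the arrows out of \<open>x\<close>.\<close>

lemma Out_card_le_split:
  assumes C: "category C" "finite (cArr C)"
    and g: "g \<in> Hom C x y" and g': "g' \<in> Hom C y x" and gg': "cComp C g g' = cId C y"
  shows "card (Out C y) \<le> card (Out C x)"
proof (rule card_inj_on_le[where f = "\<lambda>f. cComp C f g"])
  show "finite (Out C x)" using C by (simp add: Out_def)
  show "(\<lambda>f. cComp C f g) ` Out C y \<subseteq> Out C x"
    using g cat_comp[OF C(1)] cat_comp_dom[OF C(1)] by (auto simp: Out_def Hom_def)
  show "inj_on (\<lambda>f. cComp C f g) (Out C y)"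
  proof
    fix f1 f2 assume f1: "f1 \<in> Out C y" and f2: "f2 \<in> Out C y"
      and eq: "cComp C f1 g = cComp C f2 g"
    have "f1 = cComp C f1 (cComp C g g')"
      using f1 gg' cat_idr[OF C(1)] by (auto simp: Out_def)
    also have "\<dots> = cComp C (cComp C f1 g) g'"
      using f1 g g' by (intro cat_assoc[OF C(1)]) (auto simp: Out_def Hom_def)
    also have "\<dots> = cComp C (cComp C f2 g) g'" using eq by simp
    also have "\<dots> = cComp C f2 (cComp C g g')"
      using f2 g g' by (intro cat_assoc[OF C(1), symmetric]) (auto simp: Out_def Hom_def)
    also have "\<dots> = f2"
      using f2 gg' cat_idr[OF C(1)] by (auto simp: Out_def)
    finally show "f1 = f2" .
  qed
qed

lemma groupoid_Out_card_eq:
  assumes C: "category C" "finite (cArr C)" and G: "groupoid C" and g: "g \<in> Hom C x y"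
  shows "card (Out C y) = card (Out C x)"
proof -
  obtain g' where g': "g' \<in> Hom C y x" "cComp C g' g = cId C x" "cComp C g g' = cId C y"
    using G g unfolding groupoid_def Hom_def by fastforce
  show ?thesis
    using Out_card_le_split[OF C g g'(1,3)] Out_card_le_split[OF C g'(1) g g'(2)] by simp
qed

lemma groupoid_weighting:
  assumes C: "category C" "finite (cArr C)" "finite (cObj C)" and G: "groupoid C"
  shows "is_weighting (cObj C) (cObj C) (sim_matrix C) (\<lambda>x. 1 / of_nat (card (Out C x)))"
  unfolding is_weighting_def
proof
  fix x assume x: "x \<in> cObj C"
  have "cId C x \<in> Out C x" using x by (simp add: Out_def cat_id[OF C(1)] cat_id_dom[OF C(1)])
  then have pos: "card (Out C x) > 0" using C(2) by (auto simp: Out_def card_gt_0_iff)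
  have "(\<Sum>y\<in>cObj C. sim_matrix C x y * (1 / of_nat (card (Out C y))))
      = (\<Sum>y\<in>cObj C. of_nat (card (Hom C x y)) / of_nat (card (Out C x)))"
  proof (rule sum.cong[OF refl])
    fix y
    show "sim_matrix C x y * (1 / of_nat (card (Out C y)))
        = of_nat (card (Hom C x y)) / of_nat (card (Out C x))"
      using groupoid_Out_card_eq[OF C(1,2) G, of _ x y]
      by (cases "Hom C x y = {}") (auto simp: sim_matrix_Hom)
  qed
  also have "\<dots> = of_nat (\<Sum>y\<in>cObj C. card (Hom C x y)) / of_nat (card (Out C x))"
    by (simp add: sum_divide_distrib)
  also have "(\<Sum>y\<in>cObj C. card (Hom C x y)) = card (\<Union>y\<in>cObj C. Hom C x y)"
    by (rule card_UN_disjoint[symmetric]) (use C in \<open>auto simp: Hom_def\<close>)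
  also have "(\<Union>y\<in>cObj C. Hom C x y) = Out C x"
    using cat_cod[OF C(1)] by (auto simp: Hom_def Out_def)
  finally show "(\<Sum>y\<in>cObj C. sim_matrix C x y * (1 / of_nat (card (Out C y)))) = 1"
    using pos by simp
qed

lemma groupoid_coweighting:
  assumes C: "category C" "finite (cArr C)" "finite (cObj C)" and G: "groupoid C"
  shows "is_coweighting (cObj C) (cObj C) (sim_matrix C) (\<lambda>x. 1 / of_nat (card (In C x)))"
proof -
  have "is_weighting (cObj C) (cObj C) (sim_matrix (opposite C))
      (\<lambda>x. 1 / of_nat (card (Out (opposite C) x)))"
    using groupoid_weighting[of "opposite C"] C G by (simp add: category_opposite groupoid_opposite)
  then show ?thesis
    by (simp add: is_weighting_def is_coweighting_def sim_matrix_opposite Out_opposite mult.commute)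
qed

section \<open>Euler characteristic from a weighting and a coweighting\<close>

lemma weighting_cong:
  "is_weighting I J \<zeta> k \<Longrightarrow> (\<And>j. j \<in> J \<Longrightarrow> k j = k' j) \<Longrightarrow> is_weighting I J \<zeta> k'"
  unfolding is_weighting_def by simp

lemma coweighting_cong:
  "is_coweighting I J \<zeta> c \<Longrightarrow> (\<And>i. i \<in> I \<Longrightarrow> c i = c' i) \<Longrightarrow> is_coweighting I J \<zeta> c'"
  unfolding is_coweighting_def by simp

lemma weighting_sum_eq:
  assumes "finite I" "finite J" "is_weighting I J \<zeta> k" "is_coweighting I J \<zeta> c"
  shows "(\<Sum>j\<in>J. k j) = (\<Sum>i\<in>I. c i)"
proof -
  have "(\<Sum>j\<in>J. k j) = (\<Sum>j\<in>J. (\<Sum>i\<in>I. c i * \<zeta> i j) * k j)"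
    using assms(4) unfolding is_coweighting_def by simp
  also have "\<dots> = (\<Sum>i\<in>I. c i * (\<Sum>j\<in>J. \<zeta> i j * k j))"
    by (simp add: sum_distrib_left sum_distrib_right mult.assoc) (rule sum.swap)
  also have "\<dots> = (\<Sum>i\<in>I. c i)"
    using assms(3) unfolding is_weighting_def by simp
  finally show ?thesis .
qed

lemma euler_charI:
  assumes fin: "finite (cObj C)"
    and k: "is_weighting (cObj C) (cObj C) (sim_matrix C) k"
    and c: "is_coweighting (cObj C) (cObj C) (sim_matrix C) c"
  shows "has_euler_char C \<and> euler_char C = (\<Sum>x\<in>cObj C. k x)"
proof
  show "has_euler_char C"
    using k c unfolding has_euler_char_def has_euler_char_mat_def by blast
  let ?k = "SOME k. is_weighting (cObj C) (cObj C) (sim_matrix C) k"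
  have "is_weighting (cObj C) (cObj C) (sim_matrix C) ?k" using k by (metis someI)
  then show "euler_char C = (\<Sum>x\<in>cObj C. k x)"
    unfolding euler_char_def euler_char_mat_def
    using weighting_sum_eq[OF fin fin _ c] k by metis
qed

lemma euler_char_weighting:
  assumes "finite (cObj C)" "has_euler_char C"
    and "is_weighting (cObj C) (cObj C) (sim_matrix C) k"
  shows "euler_char C = (\<Sum>x\<in>cObj C. k x)"
  using assms euler_charI unfolding has_euler_char_def has_euler_char_mat_def by blast

section \<open>Finite categories fibered in groupoids\<close>

definition objs_over :: "('o, 'a) cat \<Rightarrow> ('o \<Rightarrow> 'p) \<Rightarrow> 'p \<Rightarrow> 'o set" where
  "objs_over E Po b = {e \<in> cObj E. Po e = b}"

definition lifts :: "('o, 'a) cat \<Rightarrow> ('a \<Rightarrow> 'b) \<Rightarrow> 'o \<Rightarrow> 'o \<Rightarrow> 'b \<Rightarrow> 'a set" where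
  "lifts E Pa x y h = {g \<in> cArr E. cDom E g = x \<and> cCod E g = y \<and> Pa g = h}"

lemma lifts_opposite: "lifts (opposite E) Pa x y h = lifts E Pa y x h"
  by (auto simp: lifts_def)

lemma fiber_simps:
  "cObj (fiber E B Po Pa b) = objs_over E Po b"
  "cArr (fiber E B Po Pa b) = {f \<in> cArr E. Pa f = cId B b}"
  "cDom (fiber E B Po Pa b) = cDom E" "cCod (fiber E B Po Pa b) = cCod E"
  "cId (fiber E B Po Pa b) = cId E" "cComp (fiber E B Po Pa b) = cComp E"
  by (simp_all add: fiber_def objs_over_def)

lemma fiber_opposite: "fiber (opposite E) (opposite B) Po Pa b = opposite (fiber E B Po Pa b)"
  by (simp add: fiber_def opposite_def)

definition fiber_weight :: "('o, 'a) cat \<Rightarrow> ('p, 'b) cat \<Rightarrow> ('o \<Rightarrow> 'p) \<Rightarrow> ('a \<Rightarrow> 'b) \<Rightarrow> 'o \<Rightarrow> rat" where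
  "fiber_weight E B Po Pa x = 1 / of_nat (card (Out (fiber E B Po Pa (Po x)) x))"

definition fiber_coweight :: "('o, 'a) cat \<Rightarrow> ('p, 'b) cat \<Rightarrow> ('o \<Rightarrow> 'p) \<Rightarrow> ('a \<Rightarrow> 'b) \<Rightarrow> 'o \<Rightarrow> rat" where
  "fiber_coweight E B Po Pa x = 1 / of_nat (card (In (fiber E B Po Pa (Po x)) x))"

lemma fiber_coweight_opposite:
  "fiber_coweight (opposite E) (opposite B) Po Pa x = fiber_weight E B Po Pa x"
  by (simp add: fiber_coweight_def fiber_weight_def fiber_opposite In_opposite)

locale groupoid_fibration =
  fixes E :: "('o, 'a) cat" and B :: "('p, 'b) cat" and Po :: "'o \<Rightarrow> 'p" and Pa :: "'a \<Rightarrow> 'b"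
  assumes finite_E: "finite_cat E" and finite_B: "finite_cat B"
    and functor_P: "is_functor E B Po Pa"
    and fibered: "fibered_in_groupoids E B Po Pa"
begin

lemma catE: "category E" and catB: "category B"
  and finE: "finite (cArr E)" "finite (cObj E)" and finB: "finite (cArr B)" "finite (cObj B)"
  using finite_E finite_B by (auto simp: finite_cat_def)

lemma Po_obj: "x \<in> cObj E \<Longrightarrow> Po x \<in> cObj B"
  and Pa_arr: "f \<in> cArr E \<Longrightarrow> Pa f \<in> cArr B"
  and Pa_dom: "f \<in> cArr E \<Longrightarrow> cDom B (Pa f) = Po (cDom E f)"
  and Pa_cod: "f \<in> cArr E \<Longrightarrow> cCod B (Pa f) = Po (cCod E f)"
  and Pa_id: "x \<in> cObj E \<Longrightarrow> Pa (cId E x) = cId B (Po x)"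
  and Pa_comp: "f \<in> cArr E \<Longrightarrow> g \<in> cArr E \<Longrightarrow> cCod E f = cDom E g \<Longrightarrow>
      Pa (cComp E g f) = cComp B (Pa g) (Pa f)"
  using functor_P unfolding is_functor_def by blast+

lemma lift_exists:
  "e \<in> cObj E \<Longrightarrow> h \<in> cArr B \<Longrightarrow> cCod B h = Po e \<Longrightarrow> \<exists>ft\<in>cArr E. cCod E ft = e \<and> Pa ft = h"
  using fibered unfolding fibered_in_groupoids_def by blast

lemma finite_objs_over: "finite (objs_over E Po b)"
  using finE by (simp add: objs_over_def)

lemma factor_vertically:
  assumes f: "f \<in> cArr E" and g: "g \<in> cArr E" and cod: "cCod E g = cCod E f"
    and img: "Pa g = Pa f" and base: "Po (cDom E g) = Po (cDom E f)"
  shows "\<exists>!u. u \<in> cArr E \<and> cDom E u = cDom E g \<and> cCod E u = cDom E f \<and>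
             Pa u = cId B (Po (cDom E f)) \<and> cComp E f u = g"
proof -
  let ?b = "Po (cDom E f)"
  have b: "?b \<in> cObj B" using f by (simp add: Po_obj cat_dom[OF catE])
  have "cartesian E B Po Pa f" using fibered f unfolding fibered_in_groupoids_def by blast
  moreover have "cComp B (Pa f) (cId B ?b) = Pa g"
    using cat_idr[OF catB Pa_arr[OF f]] f img by (simp add: Pa_dom)
  moreover have "cId B ?b \<in> cArr B" "cDom B (cId B ?b) = Po (cDom E g)" "cCod B (cId B ?b) = ?b"
    using b base by (simp_all add: cat_id[OF catB] cat_id_dom[OF catB] cat_id_cod[OF catB])
  ultimately show ?thesis
    using g cod unfolding cartesian_def by blast
qed

lemma fiber_arr_base:
  assumes "f \<in> cArr E" "Pa f = cId B b" "b \<in> cObj B"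
  shows "Po (cDom E f) = b" "Po (cCod E f) = b"
  using assms Pa_dom Pa_cod cat_id_dom[OF catB] cat_id_cod[OF catB] by metis+

lemma id_id: "b \<in> cObj B \<Longrightarrow> cComp B (cId B b) (cId B b) = cId B b"
  using cat_idl[OF catB, of "cId B b"] by (simp add: cat_id[OF catB] cat_id_cod[OF catB])

lemma fiber_category: "b \<in> cObj B \<Longrightarrow> category (fiber E B Po Pa b)"
  unfolding category_def fiber_simps objs_over_def
  using catE fiber_arr_base by (auto simp: cat_facts Pa_id Pa_comp id_id)

text \<open>Each fiber is a groupoid: a fiber arrow \<open>f : x \<rightarrow> y\<close> gets a right inverse by factoring
  \<open>id y\<close> through it, which is also a left inverse by uniqueness of the factorization of \<open>f\<close>.\<close>

lemma fiber_groupoid: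
  assumes b: "b \<in> cObj B"
  shows "groupoid (fiber E B Po Pa b)"
  unfolding groupoid_def fiber_simps
proof (intro ballI)
  fix f assume "f \<in> {f \<in> cArr E. Pa f = cId B b}"
  then have f: "f \<in> cArr E" "Pa f = cId B b" by auto
  define x where "x = cDom E f"
  define y where "y = cCod E f"
  have x: "x \<in> cObj E" "Po x = b" and y: "y \<in> cObj E" "Po y = b"
    using f fiber_arr_base[OF f b] by (auto simp: x_def y_def cat_dom[OF catE] cat_cod[OF catE])
  obtain u where u: "u \<in> cArr E" "cDom E u = y" "cCod E u = x" "Pa u = cId B b"
    "cComp E f u = cId E y"
    using factor_vertically[OF f(1), of "cId E y"] f x y
    by (auto simp: cat_facts[OF catE] Pa_id x_def y_def)
  have unique: "\<exists>!v. v \<in> cArr E \<and> cDom E v = x \<and> cCod E v = x \<and> Pa v = cId B b \<and> cComp E f v = f"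
    using factor_vertically[OF f(1) f(1)] x by (simp add: x_def)
  have "cComp E f (cComp E u f) = cComp E (cComp E f u) f"
    using f u by (intro cat_assoc[OF catE]) (auto simp: x_def y_def)
  also have "\<dots> = f" using u f by (simp add: cat_idl[OF catE] y_def)
  finally have uf: "cComp E u f \<in> cArr E \<and> cDom E (cComp E u f) = x \<and> cCod E (cComp E u f) = x \<and>
      Pa (cComp E u f) = cId B b \<and> cComp E f (cComp E u f) = f"
    using f u b by (simp add: cat_facts[OF catE] Pa_comp id_id x_def y_def)
  have "cId E x \<in> cArr E \<and> cDom E (cId E x) = x \<and> cCod E (cId E x) = x \<and>
      Pa (cId E x) = cId B b \<and> cComp E f (cId E x) = f"
    using f x by (simp add: cat_facts[OF catE] Pa_id x_def)
  with unique uf have "cComp E u f = cId E x" by blast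
  then show "\<exists>g\<in>{f \<in> cArr E. Pa f = cId B b}. cDom E g = cCod E f \<and> cCod E g = cDom E f \<and>
      cComp E g f = cId E (cDom E f) \<and> cComp E f g = cId E (cCod E f)"
    using u by (auto simp: x_def y_def)
qed

lemma fiber_weighting:
  assumes b: "b \<in> cObj B"
  shows "is_weighting (objs_over E Po b) (objs_over E Po b) (sim_matrix (fiber E B Po Pa b))
           (fiber_weight E B Po Pa)"
proof -
  have "is_weighting (cObj (fiber E B Po Pa b)) (cObj (fiber E B Po Pa b)) (sim_matrix (fiber E B Po Pa b))
      (\<lambda>x. 1 / of_nat (card (Out (fiber E B Po Pa b) x)))"
    by (rule groupoid_weighting[OF fiber_category[OF b] _ _ fiber_groupoid[OF b]])
      (use finE in \<open>simp_all add: fiber_simps objs_over_def\<close>)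
  then show ?thesis
    unfolding fiber_simps(1) by (rule weighting_cong) (simp add: fiber_weight_def objs_over_def)
qed

lemma fiber_coweighting:
  assumes b: "b \<in> cObj B"
  shows "is_coweighting (objs_over E Po b) (objs_over E Po b) (sim_matrix (fiber E B Po Pa b))
           (fiber_coweight E B Po Pa)"
proof -
  have "is_coweighting (cObj (fiber E B Po Pa b)) (cObj (fiber E B Po Pa b)) (sim_matrix (fiber E B Po Pa b))
      (\<lambda>x. 1 / of_nat (card (In (fiber E B Po Pa b) x)))"
    by (rule groupoid_coweighting[OF fiber_category[OF b] _ _ fiber_groupoid[OF b]])
      (use finE in \<open>simp_all add: fiber_simps objs_over_def\<close>)
  then show ?thesis
    unfolding fiber_simps(1) by (rule coweighting_cong) (simp add: fiber_coweight_def objs_over_def)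
qed

lemma lifts_bij:
  assumes ft: "ft \<in> cArr E" and x: "x \<in> objs_over E Po (Po (cDom E ft))"
  shows "bij_betw (cComp E ft) (Hom (fiber E B Po Pa (Po (cDom E ft))) x (cDom E ft))
           (lifts E Pa x (cCod E ft) (Pa ft))"
proof -
  let ?b = "Po (cDom E ft)"
  let ?vert = "\<lambda>u. u \<in> cArr E \<and> cDom E u = x \<and> cCod E u = cDom E ft \<and> Pa u = cId B ?b"
  have Hom_vert: "u \<in> Hom (fiber E B Po Pa ?b) x (cDom E ft) \<longleftrightarrow> ?vert u" for u
    by (auto simp: Hom_def fiber_simps)
  have factor: "\<exists>!u. ?vert u \<and> cComp E ft u = g" if g: "g \<in> lifts E Pa x (cCod E ft) (Pa ft)" for g
  proof -
    have "g \<in> cArr E" "cDom E g = x" "cCod E g = cCod E ft" "Pa g = Pa ft"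
      using g by (auto simp: lifts_def)
    with factor_vertically[OF ft, of g] x show ?thesis by (simp add: objs_over_def conj_assoc)
  qed
  have into: "cComp E ft u \<in> lifts E Pa x (cCod E ft) (Pa ft)" if u: "?vert u" for u
  proof -
    have "Pa (cComp E ft u) = cComp B (Pa ft) (cId B ?b)" using ft u by (simp add: Pa_comp)
    also have "\<dots> = Pa ft" using cat_idr[OF catB Pa_arr[OF ft]] ft by (simp add: Pa_dom)
    finally show ?thesis using ft u by (simp add: lifts_def cat_facts[OF catE])
  qed
  show ?thesis
  proof (rule bij_betw_imageI)
    show "inj_on (cComp E ft) (Hom (fiber E B Po Pa ?b) x (cDom E ft))"
    proof
      fix u1 u2 assume "u1 \<in> Hom (fiber E B Po Pa ?b) x (cDom E ft)"
        and "u2 \<in> Hom (fiber E B Po Pa ?b) x (cDom E ft)" and eq: "cComp E ft u1 = cComp E ft u2"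
      then have u1: "?vert u1" and u2: "?vert u2" by (simp_all only: Hom_vert)
      obtain u0 where "\<And>v. ?vert v \<and> cComp E ft v = cComp E ft u1 \<Longrightarrow> v = u0"
        using factor[OF into[OF u1]] by blast
      then show "u1 = u2" using u1 u2 eq by metis
    qed
    show "cComp E ft ` Hom (fiber E B Po Pa ?b) x (cDom E ft) = lifts E Pa x (cCod E ft) (Pa ft)"
    proof
      show "cComp E ft ` Hom (fiber E B Po Pa ?b) x (cDom E ft) \<subseteq> lifts E Pa x (cCod E ft) (Pa ft)"
        using into by (auto simp only: Hom_vert)
      show "lifts E Pa x (cCod E ft) (Pa ft) \<subseteq> cComp E ft ` Hom (fiber E B Po Pa ?b) x (cDom E ft)"
      proof
        fix g assume "g \<in> lifts E Pa x (cCod E ft) (Pa ft)"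
        then obtain u where "?vert u" "g = cComp E ft u" using factor by metis
        then show "g \<in> cComp E ft ` Hom (fiber E B Po Pa ?b) x (cDom E ft)"
          by (simp add: Hom_vert)
      qed
    qed
  qed
qed

lemma lifts_cosum:
  assumes h: "h \<in> cArr B" and x': "x' \<in> cObj E" "Po x' = cCod B h"
  shows "(\<Sum>x\<in>objs_over E Po (cDom B h). fiber_coweight E B Po Pa x * of_nat (card (lifts E Pa x x' h))) = 1"
proof -
  obtain ft where ft: "ft \<in> cArr E" "cCod E ft = x'" "Pa ft = h"
    using lift_exists[OF x'(1) h x'(2)[symmetric]] by blast
  define b where "b = cDom B h"
  define y where "y = cDom E ft"
  have b: "b \<in> cObj B" and Poy: "Po y = b"
    using h ft by (auto simp: b_def y_def cat_dom[OF catB] Pa_dom)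
  have y: "y \<in> objs_over E Po b"
    using ft Poy by (simp add: objs_over_def y_def cat_dom[OF catE])
  have "card (lifts E Pa x x' h) = card (Hom (fiber E B Po Pa b) x y)"
    if "x \<in> objs_over E Po b" for x
    using bij_betw_same_card[OF lifts_bij[OF ft(1)]] that ft Poy by (simp add: y_def)
  then have "(\<Sum>x\<in>objs_over E Po b. fiber_coweight E B Po Pa x * of_nat (card (lifts E Pa x x' h)))
      = (\<Sum>x\<in>objs_over E Po b. fiber_coweight E B Po Pa x * sim_matrix (fiber E B Po Pa b) x y)"
    by (intro sum.cong) (auto simp: sim_matrix_Hom)
  also have "\<dots> = 1"
    using fiber_coweighting[OF b] y unfolding is_coweighting_def by blast
  finally show ?thesis by (simp add: b_def)
qed

end

section \<open>Finite categories fibered and cofibered in groupoids\<close>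

locale groupoid_bifibration = groupoid_fibration +
  assumes cofibered: "cofibered_in_groupoids E B Po Pa"
begin

sublocale op: groupoid_fibration "opposite E" "opposite B" Po Pa
  using finite_E finite_B functor_P cofibered
  by unfold_locales (auto simp: finite_cat_opposite functor_opposite cofibered_in_groupoids_def)

lemma lifts_sum:
  assumes h: "h \<in> cArr B" and x: "x \<in> cObj E" "Po x = cDom B h"
  shows "(\<Sum>x'\<in>objs_over E Po (cCod B h). fiber_weight E B Po Pa x' * of_nat (card (lifts E Pa x x' h))) = 1"
  using op.lifts_cosum[of h x] h x
  by (simp add: fiber_coweight_opposite lifts_opposite objs_over_def)

definition fiber_chi where
  "fiber_chi b = (\<Sum>x\<in>objs_over E Po b. fiber_weight E B Po Pa x)"

lemma fiber_euler_char:
  assumes "b \<in> cObj B"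
  shows "has_euler_char (fiber E B Po Pa b) \<and> euler_char (fiber E B Po Pa b) = fiber_chi b"
  using euler_charI[of "fiber E B Po Pa b"] fiber_weighting[OF assms] fiber_coweighting[OF assms]
  by (simp add: fiber_simps finite_objs_over fiber_chi_def)

text \<open>Transporting along \<open>h : b \<rightarrow> b'\<close>: summing the mass-1 identities of \<open>lifts_sum\<close> against
  the coweighting of the fiber over \<open>b\<close> and those of \<open>lifts_cosum\<close> against the weighting of
  the fiber over \<open>b'\<close> gives the same double sum.\<close>

lemma fiber_chi_arr:
  assumes h: "h \<in> cArr B"
  shows "fiber_chi (cDom B h) = fiber_chi (cCod B h)"
proof -
  let ?F = "objs_over E Po (cDom B h)" and ?F' = "objs_over E Po (cCod B h)"
  let ?n = "\<lambda>x x'. of_nat (card (lifts E Pa x x' h)) :: rat"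
  have d: "cDom B h \<in> cObj B" using h by (simp add: cat_dom[OF catB])
  have "fiber_chi (cDom B h) = (\<Sum>x\<in>?F. fiber_coweight E B Po Pa x)"
    unfolding fiber_chi_def
    by (rule weighting_sum_eq[OF finite_objs_over finite_objs_over fiber_weighting[OF d]
          fiber_coweighting[OF d]])
  also have "\<dots> = (\<Sum>x\<in>?F. fiber_coweight E B Po Pa x * (\<Sum>x'\<in>?F'. fiber_weight E B Po Pa x' * ?n x x'))"
    using lifts_sum[OF h] by (intro sum.cong refl) (simp add: objs_over_def)
  also have "\<dots> = (\<Sum>x'\<in>?F'. fiber_weight E B Po Pa x' * (\<Sum>x\<in>?F. fiber_coweight E B Po Pa x * ?n x x'))"
    by (simp add: sum_distrib_left mult_ac) (rule sum.swap)
  also have "\<dots> = (\<Sum>x'\<in>?F'. fiber_weight E B Po Pa x')"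
    using lifts_cosum[OF h] by (intro sum.cong refl) (simp add: objs_over_def)
  finally show ?thesis by (simp add: fiber_chi_def)
qed

lemma fiber_chi_const:
  assumes conn: "connected_cat B" and b0: "b0 \<in> cObj B" and b: "b \<in> cObj B"
  shows "fiber_chi b = fiber_chi b0"
proof -
  let ?R = "{(cDom B f, cCod B f) | f. f \<in> cArr B}"
  have "(b0, b) \<in> (?R \<union> ?R\<inverse>)\<^sup>*"
    using conn b0 b unfolding connected_cat_def Let_def by blast
  then show ?thesis
    by (induction rule: rtrancl_induct) (auto dest: fiber_chi_arr)
qed

lemma card_Hom_E:
  assumes "e \<in> cObj E" "e' \<in> cObj E"
  shows "card (Hom E e e') = (\<Sum>h\<in>Hom B (Po e) (Po e'). card (lifts E Pa e e' h))"
proof -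
  have "Hom E e e' = (\<Union>h\<in>Hom B (Po e) (Po e'). lifts E Pa e e' h)"
    by (auto simp: Hom_def lifts_def Pa_arr Pa_dom Pa_cod)
  then show ?thesis
    by (simp add: card_UN_disjoint) (use finB finE in \<open>auto simp: Hom_def lifts_def intro!: card_UN_disjoint\<close>)
qed

lemma sum_by_fibers:
  "(\<Sum>e\<in>cObj E. g e) = (\<Sum>b\<in>cObj B. \<Sum>e\<in>objs_over E Po b. g e)"
  unfolding objs_over_def by (rule sum.group[symmetric]) (use finE finB Po_obj in auto)

lemma E_weighting:
  assumes kB: "is_weighting (cObj B) (cObj B) (sim_matrix B) kB"
  shows "is_weighting (cObj E) (cObj E) (sim_matrix E) (\<lambda>e. kB (Po e) * fiber_weight E B Po Pa e)"
  unfolding is_weighting_def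
proof
  fix e assume e: "e \<in> cObj E"
  let ?w = "fiber_weight E B Po Pa"
  have over_b': "(\<Sum>e'\<in>objs_over E Po b'. sim_matrix E e e' * (kB (Po e') * ?w e'))
      = sim_matrix B (Po e) b' * kB b'" for b'
  proof -
    have "(\<Sum>e'\<in>objs_over E Po b'. sim_matrix E e e' * (kB (Po e') * ?w e'))
       = kB b' * (\<Sum>e'\<in>objs_over E Po b'. \<Sum>h\<in>Hom B (Po e) b'. ?w e' * of_nat (card (lifts E Pa e e' h)))"
      using e by (simp add: sum_distrib_left objs_over_def sim_matrix_Hom card_Hom_E mult_ac)
    also have "\<dots> = kB b' * (\<Sum>h\<in>Hom B (Po e) b'. \<Sum>e'\<in>objs_over E Po b'. ?w e' * of_nat (card (lifts E Pa e e' h)))"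
      by (subst sum.swap) (rule refl)
    also have "\<dots> = kB b' * (\<Sum>h\<in>Hom B (Po e) b'. 1)"
      using lifts_sum e by (intro arg_cong[where f = "\<lambda>t. kB b' * t"] sum.cong) (auto simp: Hom_def)
    finally show ?thesis by (simp add: sim_matrix_Hom)
  qed
  have "(\<Sum>e'\<in>cObj E. sim_matrix E e e' * (kB (Po e') * ?w e'))
      = (\<Sum>b'\<in>cObj B. sim_matrix B (Po e) b' * kB b')"
    by (simp add: sum_by_fibers over_b')
  also have "\<dots> = 1" using kB e Po_obj unfolding is_weighting_def by blast
  finally show "(\<Sum>e'\<in>cObj E. sim_matrix E e e' * (kB (Po e') * ?w e')) = 1" .
qed

lemma E_weighting_sum:
  "(\<Sum>e\<in>cObj E. kB (Po e) * fiber_weight E B Po Pa e) = (\<Sum>b\<in>cObj B. kB b * fiber_chi b)"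
  unfolding sum_by_fibers fiber_chi_def
  by (rule sum.cong) (auto simp: objs_over_def sum_distrib_left)

end

theorem theorem2p9:
  fixes E :: "('o, 'a) cat" and B :: "('p, 'b) cat"
    and Po :: "'o \<Rightarrow> 'p" and Pa :: "'a \<Rightarrow> 'b" and b :: 'p
  assumes "finite_cat E" and "finite_cat B"
    and "is_functor E B Po Pa"
    and "fibered_in_groupoids E B Po Pa"
    and "cofibered_in_groupoids E B Po Pa"
    and "connected_cat B"
    and "b \<in> cObj B"
    and "has_euler_char E" and "has_euler_char B"
  shows "has_euler_char (fiber E B Po Pa b) \<and>
         euler_char E = euler_char B * euler_char (fiber E B Po Pa b)"
proof -
  interpret groupoid_bifibration E B Po Pa using assms(1-5) by unfold_locales
  obtain kB where kB: "is_weighting (cObj B) (cObj B) (sim_matrix B) kB"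
    using assms(9) unfolding has_euler_char_def has_euler_char_mat_def by blast
  have "euler_char E = (\<Sum>e\<in>cObj E. kB (Po e) * fiber_weight E B Po Pa e)"
    by (rule euler_char_weighting[OF finE(2) assms(8) E_weighting[OF kB]])
  also have "\<dots> = (\<Sum>b'\<in>cObj B. kB b' * fiber_chi b')"
    by (rule E_weighting_sum)
  also have "\<dots> = (\<Sum>b'\<in>cObj B. kB b') * fiber_chi b"
    using fiber_chi_const[OF assms(6,7)] by (simp add: sum_distrib_right)
  also have "\<dots> = euler_char B * fiber_chi b"
    using euler_char_weighting[OF finB(2) assms(9) kB] by simp
  finally show ?thesis
    using fiber_euler_char[OF assms(7)] by simp
qed

end
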